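(* Let $h \geq 1$ and $N \geq 1$ be integers. For all integers $d_1, \dots, d_N \in [0,h]$, the polygon $P(d_1, \dots, d_N)$ belongs to $\mathcal{P}_N$. Conversely, for every $P \in \mathcal{P}_N$ there exists a collection of integers $d_1, \dots, d_N \in [0,h]$, unique up to permutation, such that $P = P(d_1, \dots, d_N)$.
   Context: For integers $d_1, \dots, d_N$ between $0$ and $h$, the polygon $P(d_1,\dots,d_N)$ is the function on $[0,h]$ given by $P(d_1, \dots, d_N)(x) = \frac{1}{N} \sum_{i=1}^N \max(0, x + d_i - h)$. $\mathcal{P}_N$ denotes the set of convex polygons on $[0,h]$ starting at the origin (continuous convex piecewise linear functions $P$ on $[0,h]$ with $P(0)=0$) whose breakpoints have integral $x$-coordinates and whose slopes lie in $\frac{1}{N}\mathbb{Z} \cap [0,1]$. *)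

theory Defs
  imports "HOL-Analysis.Analysis" "HOL-Library.Multiset"
begin

definition polygon :: "int \<Rightarrow> int list \<Rightarrow> real \<Rightarrow> real" where
  "polygon h ds x = (1 / real (length ds)) * (\<Sum>d\<leftarrow>ds. max 0 (x + real_of_int d - real_of_int h))"

text \<open>The class P_N: continuous convex piecewise linear functions on [0,h] with P(0) = 0,
  whose breakpoints have integral x-coordinates (i.e. P is affine on each [k,k+1], k integer)
  and whose slopes lie in (1/N)Z \<inter> [0,1].  Only the values on [0,h] matter.\<close>
definition polygon_class :: "int \<Rightarrow> nat \<Rightarrow> (real \<Rightarrow> real) set" where
  "polygon_class h N = {P.
     continuous_on {0..real_of_int h} P \<and>
     convex_on {0..real_of_int h} P \<and>
     P 0 = 0 \<and>
     (\<forall>k::int. 0 \<le> k \<and> k < h \<longrightarrow>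
        (\<exists>m::int. 0 \<le> real_of_int m / real N \<and> real_of_int m / real N \<le> 1 \<and>
           (\<forall>x\<in>{real_of_int k..real_of_int k + 1}.
               P x = P (real_of_int k) + (real_of_int m / real N) * (x - real_of_int k))))}"

end

theory Submission
  imports Defs
begin

(* On [k, k+1] each summand max 0 (x + d - h) is affine, with slope 1 if h - d <= k and slope 0
   otherwise. Hence P(d_1,...,d_N) has slope c_k / N there, where c_k counts the d_i with
   h - d_i <= k, and it lies in P_N. Conversely, a member of P_N is determined by P(0) = 0 and its
   slopes m_k / N on the unit intervals; convexity makes m_k nondecreasing, so the counts c_k = m_k
   are realised by some d_1,...,d_N in [0,h], and they fix the multiset of the d_i because the
   multiplicity of d is c_(h-d) - c_(h-d-1). *)

lemma convex_on_max:
  fixes f g :: "'a::real_vector \<Rightarrow> real"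
  assumes "convex_on S f" "convex_on S g"
  shows "convex_on S (\<lambda>x. max (f x) (g x))"
proof (rule convex_onI)
  show "convex S"
    using assms(1) by (rule convex_on_imp_convex)
  fix t :: real and x y
  assume t: "0 < t" "t < 1" and xy: "x \<in> S" "y \<in> S"
  have "(1 - t) * f x + t * f y \<le> (1 - t) * max (f x) (g x) + t * max (f y) (g y)"
    "(1 - t) * g x + t * g y \<le> (1 - t) * max (f x) (g x) + t * max (f y) (g y)"
    using t by (intro add_mono mult_left_mono; simp)+
  then show "max (f ((1 - t) *\<^sub>R x + t *\<^sub>R y)) (g ((1 - t) *\<^sub>R x + t *\<^sub>R y))
      \<le> (1 - t) * max (f x) (g x) + t * max (f y) (g y)"
    using convex_onD[OF assms(1), of t x y] convex_onD[OF assms(2), of t x y] t xy by simp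
qed

lemma continuous_on_sum_list:
  fixes f :: "'b \<Rightarrow> 'a::topological_space \<Rightarrow> 'c::topological_monoid_add"
  shows "(\<And>d. d \<in> set ds \<Longrightarrow> continuous_on S (f d)) \<Longrightarrow> continuous_on S (\<lambda>x. \<Sum>d\<leftarrow>ds. f d x)"
  by (induction ds) (simp_all add: continuous_on_add)

lemma convex_on_sum_list:
  "convex S \<Longrightarrow> (\<And>d. d \<in> set ds \<Longrightarrow> convex_on S (f d)) \<Longrightarrow> convex_on S (\<lambda>x. \<Sum>d\<leftarrow>ds. f d x)"
  by (induction ds) (auto simp: convex_on_const)

lemma convex_on_increment_mono:
  fixes f :: "real \<Rightarrow> real"
  assumes "convex_on S f" "x \<in> S" "x + 2 * t \<in> S"
  shows "f (x + t) - f x \<le> f (x + 2 * t) - f (x + t)"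
proof -
  have "f ((1 - 1/2) *\<^sub>R x + (1/2) *\<^sub>R (x + 2 * t)) \<le> (1 - 1/2) * f x + (1/2) * f (x + 2 * t)"
    using assms by (intro convex_onD) auto
  moreover have "(1 - 1/2) *\<^sub>R x + (1/2) *\<^sub>R (x + 2 * t) = x + t"
    by (simp add: field_simps)
  ultimately show ?thesis
    by simp
qed

definition slope_count :: "int \<Rightarrow> int list \<Rightarrow> int \<Rightarrow> nat" where
  "slope_count h ds k = length (filter (\<lambda>d. h - d \<le> k) ds)"

lemma max_0_affine_on_unit_interval:
  fixes x :: real and h k d :: int
  assumes "k \<le> x" "x \<le> real_of_int k + 1"
  shows "max 0 (x + d - h) = max 0 (real_of_int k + d - h) + (if h - d \<le> k then x - k else 0)"
proof (cases "h - d \<le> k")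
  case True
  then have "real_of_int h - d \<le> k"
    by (metis of_int_diff of_int_le_iff)
  with True assms show ?thesis
    by auto
next
  case False
  then have "real_of_int h - d \<ge> k + 1"
    by (metis add1_zle_eq not_le of_int_add of_int_diff of_int_le_iff of_int_1)
  with False assms show ?thesis
    by auto
qed

lemma polygon_affine_on_unit_interval:
  fixes x :: real and h k :: int
  assumes "k \<le> x" "x \<le> real_of_int k + 1"
  shows "polygon h ds x = polygon h ds k + slope_count h ds k / length ds * (x - k)"
proof -
  have "(\<Sum>d\<leftarrow>ds. max 0 (x + d - h)) = (\<Sum>d\<leftarrow>ds. max 0 (real_of_int k + d - h)) + slope_count h ds k * (x - k)"
    by (induction ds) (auto simp: slope_count_def max_0_affine_on_unit_interval[OF assms] algebra_simps)
  then show ?thesis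
    by (simp add: polygon_def distrib_left)
qed

lemma polygon_at_zero:
  assumes "set ds \<subseteq> {..h}"
  shows "polygon h ds 0 = 0"
proof -
  have "(\<Sum>d\<leftarrow>ds. max 0 (0 + real_of_int d - h)) = 0"
    using assms by (induction ds) auto
  then show ?thesis
    by (simp add: polygon_def)
qed

lemma polygon_in_polygon_class:
  assumes "length ds = N" "set ds \<subseteq> {0..h}"
  shows "polygon h ds \<in> polygon_class h N"
  unfolding polygon_class_def mem_Collect_eq
proof (intro conjI allI impI)
  show "continuous_on {0..real_of_int h} (polygon h ds)"
    unfolding polygon_def by (intro continuous_intros continuous_on_sum_list)
  have "convex_on {0..real_of_int h} (\<lambda>x. max 0 (x + d - h))" for d :: int
    by (intro convex_on_max convex_on_diff convex_on_add)
      (simp_all add: convex_on_const convex_on_ident concave_on_const)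
  then show "convex_on {0..real_of_int h} (polygon h ds)"
    unfolding polygon_def by (intro convex_on_cmul convex_on_sum_list) auto
  show "polygon h ds 0 = 0"
    using assms(2) by (intro polygon_at_zero) auto
  fix k :: int
  assume "0 \<le> k \<and> k < h"
  have "real (slope_count h ds k) / N \<le> 1"
    using assms(1) by (cases "N = 0") (auto simp: slope_count_def)
  then show "\<exists>m::int. 0 \<le> m / real N \<and> m / real N \<le> 1 \<and>
      (\<forall>x\<in>{real_of_int k..real_of_int k + 1}. polygon h ds x = polygon h ds k + m / real N * (x - k))"
    using polygon_affine_on_unit_interval assms(1)
    by (intro exI[of _ "int (slope_count h ds k)"]) auto
qed

lemma slope_count_eq_0: "set ds \<subseteq> {..h} \<Longrightarrow> k < 0 \<Longrightarrow> slope_count h ds k = 0"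
  unfolding slope_count_def by (auto simp: filter_empty_conv)

lemma slope_count_eq_length: "set ds \<subseteq> {0..} \<Longrightarrow> h \<le> k \<Longrightarrow> slope_count h ds k = length ds"
  unfolding slope_count_def by (subst filter_True) auto

lemma count_list_eq_slope_count_diff:
  "int (count_list ds d) = int (slope_count h ds (h - d)) - int (slope_count h ds (h - d - 1))"
  by (induction ds) (auto simp: slope_count_def)

lemma mset_eq_if_slope_count_eq:
  assumes "\<And>k. slope_count h es k = slope_count h ds k"
  shows "mset es = mset ds"
proof (rule multiset_eqI)
  fix d
  have "int (count_list es d) = int (count_list ds d)"
    using count_list_eq_slope_count_diff[of es d h] count_list_eq_slope_count_diff[of ds d h] assms
    by simp
  then show "count (mset es) d = count (mset ds) d"
    by (simp add: count_mset)
qed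

lemma polygon_determines_mset:
  assumes "length es = length ds" "set ds \<subseteq> {0..h}" "set es \<subseteq> {0..h}"
    and "\<forall>x\<in>{0..real_of_int h}. polygon h es x = polygon h ds x"
  shows "mset es = mset ds"
proof (rule mset_eq_if_slope_count_eq)
  fix k
  consider "k < 0" | "h \<le> k" | "0 \<le> k" "k < h"
    by linarith
  then show "slope_count h es k = slope_count h ds k"
  proof cases
    case 1
    with assms(2,3) show ?thesis
      by (simp add: slope_count_eq_0 subset_iff)
  next
    case 2
    with assms(1-3) show ?thesis
      by (simp add: slope_count_eq_length subset_iff)
  next
    case 3
    have "polygon h xs (real_of_int k + 1) = polygon h xs k + slope_count h xs k / length xs" for xs
      using polygon_affine_on_unit_interval[of k "real_of_int k + 1"] by simp
    moreover have "polygon h es x = polygon h ds x" if "x \<in> {real_of_int k, real_of_int k + 1}" for x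
      using assms(4) 3 that by auto
    ultimately have "real (slope_count h es k) / length ds = slope_count h ds k / length ds"
      using assms(1) by (metis add_left_cancel insertCI)
    moreover have "slope_count h xs k \<le> length xs" for xs
      by (simp add: slope_count_def)
    ultimately show ?thesis
      using assms(1) by (cases "length ds = 0") auto
  qed
qed

lemma polygon_class_slopesE:
  assumes "P \<in> polygon_class h N" "N \<ge> 1"
  obtains m :: "int \<Rightarrow> int" where
    "\<And>k. 0 \<le> k \<Longrightarrow> k < h \<Longrightarrow> 0 \<le> m k \<and> m k \<le> N"
    "\<And>k x. 0 \<le> k \<Longrightarrow> k < h \<Longrightarrow> k \<le> x \<Longrightarrow> x \<le> real_of_int k + 1 \<Longrightarrow> P x = P k + m k / N * (x - k)"
    "\<And>k. 0 \<le> k \<Longrightarrow> k + 1 < h \<Longrightarrow> m k \<le> m (k + 1)"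
proof -
  have "\<forall>k. \<exists>m::int. 0 \<le> k \<and> k < h \<longrightarrow> 0 \<le> m / real N \<and> m / real N \<le> 1 \<and>
      (\<forall>x\<in>{real_of_int k..real_of_int k + 1}. P x = P k + m / real N * (x - k))"
    using assms(1) unfolding polygon_class_def by blast
  then obtain m :: "int \<Rightarrow> int" where m: "\<And>k. 0 \<le> k \<Longrightarrow> k < h \<Longrightarrow>
      0 \<le> m k / real N \<and> m k / real N \<le> 1 \<and>
      (\<forall>x\<in>{real_of_int k..real_of_int k + 1}. P x = P k + m k / real N * (x - k))"
    by (metis (no_types))
  have N: "real N > 0"
    using assms(2) by simp
  show thesis
  proof
    show "0 \<le> m k \<and> m k \<le> N" if "0 \<le> k" "k < h" for k
    proof -
      have "0 \<le> m k / real N" "m k / real N \<le> 1"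
        using m[OF that] by blast+
      with N show ?thesis
        by (simp add: field_simps)
    qed
    show affine: "P x = P k + m k / N * (x - k)"
      if "0 \<le> k" "k < h" "k \<le> x" "x \<le> real_of_int k + 1" for k x
      using m[OF that(1,2)] that(3,4) atLeastAtMost_iff by blast
    show "m k \<le> m (k + 1)" if "0 \<le> k" "k + 1 < h" for k
    proof -
      have "P (real_of_int k + 1) - P k \<le> P (real_of_int k + 2 * 1) - P (real_of_int k + 1)"
        using assms(1) that unfolding polygon_class_def
        by (intro convex_on_increment_mono[of "{0..real_of_int h}"]) auto
      moreover have "P (real_of_int k + 1) = P k + m k / N"
        using affine[of k "real_of_int k + 1"] that by simp
      moreover have "P (real_of_int k + 2) = P (real_of_int k + 1) + m (k + 1) / N"
        using affine[of "k + 1" "real_of_int k + 2"] that by simp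
      ultimately have "m k / real N \<le> m (k + 1) / real N"
        by simp
      with N show ?thesis
        by (simp add: divide_le_cancel)
    qed
  qed
qed

lemma exists_nat_list_with_prefix_counts:
  assumes "\<And>j. j < n \<Longrightarrow> M j \<le> M (Suc j)"
  shows "\<exists>cs. set cs \<subseteq> {..n} \<and> (\<forall>k\<le>n. length (filter (\<lambda>c. c \<le> k) cs) = M k)"
  using assms
proof (induction n)
  case 0
  show ?case
    by (intro exI[of _ "replicate (M 0) 0"]) auto
next
  case (Suc n)
  then obtain cs where cs: "set cs \<subseteq> {..n}" "\<forall>k\<le>n. length (filter (\<lambda>c. c \<le> k) cs) = M k"
    by auto
  let ?cs' = "cs @ replicate (M (Suc n) - M n) (Suc n)"
  have "length (filter (\<lambda>c. c \<le> k) ?cs') = M k" if "k \<le> Suc n" for k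
  proof (cases "k = Suc n")
    case True
    have "filter (\<lambda>c. c \<le> n) cs = cs" "filter (\<lambda>c. c \<le> Suc n) cs = cs"
      using cs(1) by (auto intro!: filter_True)
    then have "length cs = M n"
      using cs(2) by (metis order_refl)
    with True \<open>filter (\<lambda>c. c \<le> Suc n) cs = cs\<close> Suc.prems[of n] show ?thesis
      by simp
  next
    case False
    with that cs(2) show ?thesis
      by simp
  qed
  with cs(1) show ?case
    by (intro exI[of _ ?cs']) auto
qed

lemma exists_list_with_slope_counts:
  fixes h :: int and m :: "int \<Rightarrow> int" and N :: nat
  assumes "0 \<le> h"
    and "\<And>k. 0 \<le> k \<Longrightarrow> k < h \<Longrightarrow> 0 \<le> m k \<and> m k \<le> N"
    and "\<And>k. 0 \<le> k \<Longrightarrow> k + 1 < h \<Longrightarrow> m k \<le> m (k + 1)"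
  obtains ds where "length ds = N" "set ds \<subseteq> {0..h}"
    "\<And>k. 0 \<le> k \<Longrightarrow> k < h \<Longrightarrow> slope_count h ds k = m k"
proof -
  \<comment> \<open>An entry c of cs stands for d = h - c; the value M n = N fixes the length of cs.\<close>
  define n where "n = nat h"
  define M where "M j = (if j < n then nat (m (int j)) else N)" for j
  have "M j \<le> M (Suc j)" if "j < n" for j
  proof (cases "Suc j < n")
    case True
    then have "m (int j) \<le> m (int (Suc j))"
      using assms(3)[of "int j"] by (simp add: n_def add.commute)
    with True show ?thesis
      by (simp add: M_def nat_mono)
  next
    case False
    with that assms(2)[of "int j"] show ?thesis
      by (simp add: M_def n_def nat_le_iff)
  qed
  then obtain cs where cs: "set cs \<subseteq> {..n}" "\<forall>k\<le>n. length (filter (\<lambda>c. c \<le> k) cs) = M k"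
    using exists_nat_list_with_prefix_counts by blast
  define ds where "ds = map (\<lambda>c. h - int c) cs"
  have "filter (\<lambda>c. c \<le> n) cs = cs"
    using cs(1) by (auto intro!: filter_True)
  then have "length ds = N"
    using cs(2)[rule_format, of n] by (simp add: ds_def M_def)
  moreover have "set ds \<subseteq> {0..h}"
    using cs(1) assms(1) by (auto simp: ds_def n_def)
  moreover have "slope_count h ds k = m k" if "0 \<le> k" "k < h" for k
  proof -
    have "slope_count h ds k = length (filter (\<lambda>c. c \<le> nat k) cs)"
      unfolding slope_count_def ds_def filter_map length_map o_def
      by (rule arg_cong[where f = length], rule filter_cong) (use that in auto)
    also have "\<dots> = nat (m k)"
      using cs(2) that assms(2) by (simp add: M_def n_def)
    finally show ?thesis
      using assms(2) that by simp
  qed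
  ultimately show thesis
    using that by blast
qed

lemma eq_if_same_slopes_on_unit_intervals:
  fixes f g :: "real \<Rightarrow> real" and h :: int and s :: "int \<Rightarrow> real" and x :: real
  assumes "f 0 = g 0"
    and f: "\<And>k x. 0 \<le> k \<Longrightarrow> k < h \<Longrightarrow> k \<le> x \<Longrightarrow> x \<le> real_of_int k + 1 \<Longrightarrow> f x = f k + s k * (x - k)"
    and g: "\<And>k x. 0 \<le> k \<Longrightarrow> k < h \<Longrightarrow> k \<le> x \<Longrightarrow> x \<le> real_of_int k + 1 \<Longrightarrow> g x = g k + s k * (x - k)"
    and x: "0 \<le> x" "x \<le> h"
  shows "f x = g x"
proof -
  have at_int: "f (int j) = g (int j)" if "int j \<le> h" for j :: nat
    using that
  proof (induction j)
    case 0
    with assms(1) show ?case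
      by simp
  next
    case (Suc j)
    then have "f (int j) = g (int j)" "int j < h"
      by auto
    with f[of "int j" "int j + 1"] g[of "int j" "int j + 1"] show ?case
      by (simp add: add.commute)
  qed
  define k where "k = \<lfloor>x\<rfloor>"
  have k: "0 \<le> k" "k \<le> x" "x \<le> real_of_int k + 1"
    using x by (auto simp: k_def)
  show ?thesis
  proof (cases "k < h")
    case True
    with k at_int[of "nat k"] f[OF k(1) True k(2,3)] g[OF k(1) True k(2,3)] show ?thesis
      by simp
  next
    case False
    with k x have "x = h" "0 \<le> h"
      by linarith+
    with at_int[of "nat h"] show ?thesis
      by simp
  qed
qed

lemma polygon_classE:
  assumes "P \<in> polygon_class h N" "N \<ge> 1" "h \<ge> 0"
  obtains ds where "length ds = N" "set ds \<subseteq> {0..h}" "\<forall>x\<in>{0..real_of_int h}. P x = polygon h ds x"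
proof -
  obtain m :: "int \<Rightarrow> int" where m_bounds: "\<And>k. 0 \<le> k \<Longrightarrow> k < h \<Longrightarrow> 0 \<le> m k \<and> m k \<le> N"
    and m_affine: "\<And>k x. 0 \<le> k \<Longrightarrow> k < h \<Longrightarrow> k \<le> x \<Longrightarrow> x \<le> real_of_int k + 1 \<Longrightarrow> P x = P k + m k / N * (x - k)"
    and m_mono: "\<And>k. 0 \<le> k \<Longrightarrow> k + 1 < h \<Longrightarrow> m k \<le> m (k + 1)"
    using polygon_class_slopesE[OF assms(1,2)] by blast
  obtain ds where ds: "length ds = N" "set ds \<subseteq> {0..h}"
    and slopes: "\<And>k. 0 \<le> k \<Longrightarrow> k < h \<Longrightarrow> slope_count h ds k = m k"
    using exists_list_with_slope_counts[of h m N, OF assms(3) m_bounds m_mono] by blast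
  have "P 0 = 0"
    using assms(1) unfolding polygon_class_def by blast
  moreover have "polygon h ds 0 = 0"
    using ds(2) by (intro polygon_at_zero) auto
  ultimately have zero: "P 0 = polygon h ds 0"
    by simp
  have polygon_affine: "polygon h ds x = polygon h ds k + m k / N * (x - k)"
    if "0 \<le> k" "k < h" "k \<le> x" "x \<le> real_of_int k + 1" for k x
    using polygon_affine_on_unit_interval[OF that(3,4)] slopes[OF that(1,2)] ds(1) by simp
  have "\<forall>x\<in>{0..real_of_int h}. P x = polygon h ds x"
    using eq_if_same_slopes_on_unit_intervals[where s = "\<lambda>k. m k / N", OF zero m_affine polygon_affine]
    by auto
  then show thesis
    by (rule that[OF ds])
qed

theorem mainTheorem1:
  fixes h :: int and N :: nat
  assumes "h \<ge> 1" and "N \<ge> 1"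
  shows "(\<forall>ds. length ds = N \<and> set ds \<subseteq> {0..h} \<longrightarrow> polygon h ds \<in> polygon_class h N)
    \<and> (\<forall>P \<in> polygon_class h N.
         \<exists>ds. length ds = N \<and> set ds \<subseteq> {0..h} \<and>
              (\<forall>x\<in>{0..real_of_int h}. P x = polygon h ds x) \<and>
              (\<forall>es. length es = N \<and> set es \<subseteq> {0..h} \<and>
                    (\<forall>x\<in>{0..real_of_int h}. P x = polygon h es x) \<longrightarrow> mset es = mset ds))"
proof (intro conjI allI impI ballI)
  show "polygon h ds \<in> polygon_class h N" if "length ds = N \<and> set ds \<subseteq> {0..h}" for ds
    using that polygon_in_polygon_class by blast
next
  fix P
  assume "P \<in> polygon_class h N"
  moreover have "h \<ge> 0"
    using assms(1) by simp
  ultimately obtain ds where ds: "length ds = N" "set ds \<subseteq> {0..h}"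
    "\<forall>x\<in>{0..real_of_int h}. P x = polygon h ds x"
    using polygon_classE assms(2) by blast
  moreover have "mset es = mset ds"
    if "length es = N \<and> set es \<subseteq> {0..h} \<and> (\<forall>x\<in>{0..real_of_int h}. P x = polygon h es x)" for es
    using that ds by (intro polygon_determines_mset) auto
  ultimately show "\<exists>ds. length ds = N \<and> set ds \<subseteq> {0..h} \<and>
      (\<forall>x\<in>{0..real_of_int h}. P x = polygon h ds x) \<and>
      (\<forall>es. length es = N \<and> set es \<subseteq> {0..h} \<and>
         (\<forall>x\<in>{0..real_of_int h}. P x = polygon h es x) \<longrightarrow> mset es = mset ds)"
    by blast
qed

end
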